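(* For every nonzero $f\in S$, $\operatorname{ann}_S\big(D/D(f)\big)=S\cdot f$.
   Context: $\mathbb K$ is a field of characteristic zero, $S=\mathbb K[x_1,\dots,x_n]$, $D=\mathrm{Der}_{\mathbb K}(S)$, the free $S$-module with basis $\partial_i=\partial/\partial x_i$. For $g\in S$ and $e\ge1$, $D(g;e)=\{\delta\in D:\delta(g)\in g^eS\}$. For nonzero $f$ with factorization $f=c f_1^{e_1}\cdots f_r^{e_r}$ into pairwise non-associate irreducibles ($c\in\mathbb K^*$), $D(f)=\bigcap_i D(f_i;e_i)$. *)

theory Defs
  imports "HOL-Library.Poly_Mapping" "HOL-Computational_Algebra.Factorial_Ring"
begin

text \<open>The polynomial ring S = K[x_i : i in 'n] over a field K, with 'n a finite
  index type of variables: polynomials are finitely supported functions from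
  monomials (exponent vectors 'n =>0 nat) to K.\<close>

type_synonym ('n, 'k) mpoly = "('n \<Rightarrow>\<^sub>0 nat) \<Rightarrow>\<^sub>0 'k"

definition const_mp :: "'k::zero \<Rightarrow> ('n, 'k) mpoly" where
  "const_mp c = Poly_Mapping.single 0 c"

definition Der :: "(('n, 'k::field) mpoly \<Rightarrow> ('n, 'k) mpoly) set" where
  "Der = {\<delta>. (\<forall>p q. \<delta> (p + q) = \<delta> p + \<delta> q)
            \<and> (\<forall>c p. \<delta> (const_mp c * p) = const_mp c * \<delta> p)
            \<and> (\<forall>p q. \<delta> (p * q) = p * \<delta> q + q * \<delta> p)}"

definition Der_log :: "('n, 'k::field) mpoly \<Rightarrow> nat \<Rightarrow> (('n, 'k) mpoly \<Rightarrow> ('n, 'k) mpoly) set" where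
  "Der_log g e = {\<delta> \<in> Der. g ^ e dvd \<delta> g}"

definition smult_der :: "('n, 'k::field) mpoly \<Rightarrow> (('n, 'k) mpoly \<Rightarrow> ('n, 'k) mpoly)
    \<Rightarrow> (('n, 'k) mpoly \<Rightarrow> ('n, 'k) mpoly)" where
  "smult_der s \<delta> = (\<lambda>g. s * \<delta> g)"

definition ann_quot :: "(('n, 'k::field) mpoly \<Rightarrow> ('n, 'k) mpoly) set \<Rightarrow> ('n, 'k) mpoly set" where
  "ann_quot M = {s. \<forall>\<delta>\<in>Der. smult_der s \<delta> \<in> M}"

end

theory Submission
  imports Defs "HOL-Computational_Algebra.Polynomial"
begin

(* "\<supseteq>": every s f maps D into D(f), since f_i^e_i divides f, hence s f \<delta>(f_i).
   "\<subseteq>": let s annihilate D / D(f). For each i choose a variable x occurring in f_i;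
   then s \<partial>_x \<in> D(f_i; e_i), i.e. f_i^e_i divides s \<partial>_x(f_i). Since S is a unique
   factorisation domain, f_i is prime, and f_i does not divide \<partial>_x(f_i) (lower degree
   in x), so f_i^e_i divides s. As the f_i are pairwise non-associate primes, their
   product, and hence f, divides s. *)

abbreviation lookup :: "('a \<Rightarrow>\<^sub>0 'b::zero) \<Rightarrow> 'a \<Rightarrow> 'b" where
  "lookup \<equiv> Poly_Mapping.lookup"
abbreviation keys :: "('a \<Rightarrow>\<^sub>0 'b::zero) \<Rightarrow> 'a set" where
  "keys \<equiv> Poly_Mapping.keys"
abbreviation single :: "'a \<Rightarrow> 'b \<Rightarrow> 'a \<Rightarrow>\<^sub>0 'b::zero" where
  "single \<equiv> Poly_Mapping.single"


section \<open>Prime elements in integral domains\<close>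

lemma prime_elem_dvd_prime_elem:
  fixes p q :: "'a::idom"
  assumes "prime_elem p" "prime_elem q" "p dvd q"
  shows "q dvd p"
proof -
  obtain c where c: "q = p * c" using assms(3) by (auto elim: dvdE)
  then have "q dvd p * c" by simp
  then have "q dvd p \<or> q dvd c" by (rule prime_elem_dvd_multD[OF assms(2)])
  moreover have "\<not> q dvd c"
  proof
    assume "q dvd c"
    then obtain d where d: "c = q * d" by (auto elim: dvdE)
    have "q * 1 = q * (p * d)" by (metis c d mult.left_commute mult.right_neutral)
    then have "1 = p * d" using prime_elem_not_zeroI[OF assms(2)] by simp
    then have "p dvd 1" by (rule dvdI)
    then show False using prime_elem_not_unit[OF assms(1)] by blast
  qed
  ultimately show ?thesis by blast
qed

lemma prime_power_dvd_cancel: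
  fixes q g s :: "'a::idom"
  assumes "prime_elem q" "\<not> q dvd g" "q ^ e dvd s * g"
  shows "q ^ e dvd s"
  using assms(3)
proof (induction e arbitrary: s)
  case 0
  then show ?case by simp
next
  case (Suc e)
  have "q dvd s * g" using Suc.prems by (metis dvd_mult_left power_Suc)
  then have "q dvd s" using prime_elem_dvd_multD[OF assms(1)] assms(2) by blast
  then obtain s' where s: "s = q * s'" by (auto elim: dvdE)
  have "q * q ^ e dvd q * (s' * g)" using Suc.prems s by (simp add: mult.assoc)
  then have "q ^ e dvd s' * g" using prime_elem_not_zeroI[OF assms(1)] by simp
  then have "q ^ e dvd s'" by (rule Suc.IH)
  then show ?case unfolding s by simp
qed

lemma prime_elem_dvd_prod:
  fixes q :: "'a::comm_semiring_1"
  assumes "prime_elem q" "finite I" "q dvd (\<Prod>i\<in>I. f i)"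
  shows "\<exists>i\<in>I. q dvd f i"
  using assms(2,3)
proof (induction I rule: finite_induct)
  case empty
  then show ?case using prime_elem_not_unit[OF assms(1)] by simp
next
  case (insert j I)
  then have "q dvd f j \<or> q dvd (\<Prod>i\<in>I. f i)" using prime_elem_dvd_multD[OF assms(1)] by simp
  then show ?case using insert.IH by blast
qed

lemma prod_prime_powers_dvd:
  fixes q :: "nat \<Rightarrow> 'a::idom"
  assumes prime: "\<forall>i<r. prime_elem (q i)"
    and nonassoc: "\<forall>i<r. \<forall>j<r. i \<noteq> j \<longrightarrow> \<not> (q i dvd q j \<and> q j dvd q i)"
    and dvd: "\<forall>i<r. q i ^ e i dvd s"
  shows "(\<Prod>i<r. q i ^ e i) dvd s"
  using prime nonassoc dvd
proof (induction r)
  case 0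
  then show ?case by simp
next
  case (Suc r)
  have "(\<Prod>i<r. q i ^ e i) dvd s" using Suc.IH Suc.prems by simp
  then obtain t where t: "s = (\<Prod>i<r. q i ^ e i) * t" by (auto elim: dvdE)
  have qr: "prime_elem (q r)" using Suc.prems(1) by simp
  have coprime: "\<not> q r dvd (\<Prod>i<r. q i ^ e i)"
  proof
    assume "q r dvd (\<Prod>i<r. q i ^ e i)"
    then obtain i where i: "i < r" "q r dvd q i ^ e i" using prime_elem_dvd_prod[OF qr] by auto
    then have "q r dvd q i" using prime_elem_dvd_power[OF qr] by blast
    moreover from this have "q i dvd q r"
      using prime_elem_dvd_prime_elem[OF qr] Suc.prems(1) i(1) by simp
    moreover have "i \<noteq> r" "i < Suc r" "r < Suc r" using i(1) by simp_all
    ultimately show False using Suc.prems(2) by blast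
  qed
  have "q r ^ e r dvd t * (\<Prod>i<r. q i ^ e i)" using Suc.prems(3) t by (simp add: mult.commute)
  then have "q r ^ e r dvd t" using prime_power_dvd_cancel[OF qr coprime] by blast
  then show ?case using t by (simp add: mult_dvd_mono)
qed

lemma content_prime_lemma:
  fixes A B :: "'a::comm_ring_1 poly"
  assumes prime: "\<And>i j. \<pi> dvd coeff A i * coeff B j \<Longrightarrow> \<pi> dvd coeff A i \<or> \<pi> dvd coeff B j"
    and dvd: "\<forall>n. \<pi> dvd coeff (A * B) n"
  shows "(\<forall>i. \<pi> dvd coeff A i) \<or> (\<forall>j. \<pi> dvd coeff B j)"
proof (rule ccontr)
  assume "\<not> ?thesis"
  then have exA: "\<exists>i. \<not> \<pi> dvd coeff A i" and exB: "\<exists>j. \<not> \<pi> dvd coeff B j" by auto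
  define i where "i = (LEAST i. \<not> \<pi> dvd coeff A i)"
  define j where "j = (LEAST j. \<not> \<pi> dvd coeff B j)"
  have Ai: "\<not> \<pi> dvd coeff A i" unfolding i_def using exA by (rule LeastI_ex)
  have Bj: "\<not> \<pi> dvd coeff B j" unfolding j_def using exB by (rule LeastI_ex)
  have Ak: "\<pi> dvd coeff A k" if "k < i" for k using that not_less_Least unfolding i_def by blast
  have Bk: "\<pi> dvd coeff B k" if "k < j" for k using that not_less_Least unfolding j_def by blast
  have split: "coeff (A * B) (i + j)
      = coeff A i * coeff B j + (\<Sum>k\<in>{..i+j} - {i}. coeff A k * coeff B (i + j - k))"
    unfolding coeff_mult by (subst sum.remove[of _ i]) auto
  have rest: "\<pi> dvd (\<Sum>k\<in>{..i+j} - {i}. coeff A k * coeff B (i + j - k))"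
  proof (rule dvd_sum)
    fix k assume "k \<in> {..i+j} - {i}"
    then have "k < i \<or> i + j - k < j" by auto
    then show "\<pi> dvd coeff A k * coeff B (i + j - k)" using Ak Bk by (meson dvd_mult dvd_mult2)
  qed
  have "\<pi> dvd coeff (A * B) (i + j)" using dvd by blast
  then have "\<pi> dvd coeff A i * coeff B j" unfolding split using dvd_add_left_iff[OF rest] by blast
  then show False using prime Ai Bj by blast
qed


section \<open>Polynomials in a subset of the variables\<close>

lemma mpoly_sum_terms: "p = (\<Sum>m\<in>keys p. single m (lookup p m))"
proof (rule poly_mapping_eqI)
  fix k
  show "lookup p k = lookup (\<Sum>m\<in>keys p. single m (lookup p m)) k"
    by (simp add: lookup_sum lookup_single when_def in_keys_iff)
qed

definition vars_in :: "'v set \<Rightarrow> ('v, 'k::zero) mpoly \<Rightarrow> bool" where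
  "vars_in V p \<longleftrightarrow> (\<forall>m\<in>keys p. keys (m::'v \<Rightarrow>\<^sub>0 nat) \<subseteq> V)"

lemma vars_in_0 [simp]: "vars_in V 0"
  by (simp add: vars_in_def)

lemma vars_in_single: "keys m \<subseteq> V \<Longrightarrow> vars_in V (single m c)"
  by (simp add: vars_in_def)

lemma vars_in_const [simp]: "vars_in V (single 0 c)"
  by (simp add: vars_in_def)

lemma vars_in_of_nat [simp]: "vars_in V (of_nat n :: ('v, 'k::comm_ring_1) mpoly)"
  using vars_in_const[of V "of_nat n :: 'k"] by (simp only: single_of_nat)

lemma vars_in_1 [simp]: "vars_in V (1 :: ('v, 'k::comm_ring_1) mpoly)"
  using vars_in_const[of V "1 :: 'k"] by (simp only: single_one)

lemma vars_in_add: "vars_in V p \<Longrightarrow> vars_in V q \<Longrightarrow> vars_in V (p + q)"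
  unfolding vars_in_def using keys_add[of p q] by (meson Un_iff subsetD)

lemma vars_in_uminus: "vars_in V (p :: ('v, 'k::ab_group_add) mpoly) \<Longrightarrow> vars_in V (- p)"
  unfolding vars_in_def keys_minus .

lemma vars_in_diff:
  "vars_in V (p :: ('v, 'k::ab_group_add) mpoly) \<Longrightarrow> vars_in V q \<Longrightarrow> vars_in V (p - q)"
  using vars_in_add[OF _ vars_in_uminus] by (metis diff_conv_add_uminus)

lemma keys_add_monomial: "keys ((a :: 'v \<Rightarrow>\<^sub>0 nat) + b) = keys a \<union> keys b"
  by (auto simp: in_keys_iff lookup_add)

lemma vars_in_mult:
  "vars_in V (p :: ('v, 'k::comm_ring_1) mpoly) \<Longrightarrow> vars_in V q \<Longrightarrow> vars_in V (p * q)"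
  unfolding vars_in_def using keys_mult[of p q] by (force simp: keys_add_monomial)

lemma vars_in_sum:
  "(\<And>i. i \<in> I \<Longrightarrow> vars_in V (f i)) \<Longrightarrow> vars_in V (sum f I :: ('v, 'k::comm_ring_1) mpoly)"
  by (induction I rule: infinite_finite_induct) (auto intro: vars_in_add)

lemma vars_in_power: "vars_in V (p :: ('v, 'k::comm_ring_1) mpoly) \<Longrightarrow> vars_in V (p ^ n)"
  by (induction n) (auto intro: vars_in_mult)

lemma vars_in_mono: "vars_in V p \<Longrightarrow> V \<subseteq> W \<Longrightarrow> vars_in W p"
  unfolding vars_in_def by blast

lemma vars_in_iff: "vars_in V p \<longleftrightarrow> (\<forall>x. x \<notin> V \<longrightarrow> vars_in (- {x}) p)"
  unfolding vars_in_def by blast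

lemma vars_in_UNIV [simp]: "vars_in UNIV p"
  unfolding vars_in_def by blast

lemma vars_in_empty_const: "vars_in {} p \<Longrightarrow> p = single 0 (lookup p 0)"
proof (rule poly_mapping_eqI)
  fix m assume "vars_in {} p"
  then have "m \<in> keys p \<Longrightarrow> m = 0" unfolding vars_in_def by auto
  then show "lookup p m = lookup (single 0 (lookup p 0)) m"
    by (cases "m = 0") (auto simp: lookup_single in_keys_iff)
qed


section \<open>The univariate view: K[W \<union> {x}] = K[W][x]\<close>

definition Var :: "'v \<Rightarrow> ('v, 'k::comm_ring_1) mpoly" where
  "Var x = single (single x 1) 1"

lemma Var_power: "Var x ^ n = single (single x n) 1"
  by (induction n) (simp_all add: Var_def mult_single single_add[symmetric] add.commute)

lemma vars_in_Var: "x \<in> V \<Longrightarrow> vars_in V (Var x :: ('v, 'k::comm_ring_1) mpoly)"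
  unfolding Var_def by (rule vars_in_single) simp

definition eval_var :: "'v \<Rightarrow> ('v, 'k::comm_ring_1) mpoly poly \<Rightarrow> ('v, 'k) mpoly" where
  "eval_var x Q = poly Q (Var x)"

lemma eval_var_0 [simp]: "eval_var x 0 = 0"
  by (simp add: eval_var_def)
lemma eval_var_add [simp]: "eval_var x (P + Q) = eval_var x P + eval_var x Q"
  by (simp add: eval_var_def)
lemma eval_var_diff [simp]: "eval_var x (P - Q) = eval_var x P - eval_var x Q"
  by (simp add: eval_var_def)
lemma eval_var_mult [simp]: "eval_var x (P * Q) = eval_var x P * eval_var x Q"
  by (simp add: eval_var_def)
lemma eval_var_const [simp]: "eval_var x [:c:] = c"
  by (simp add: eval_var_def)
lemma eval_var_smult [simp]: "eval_var x (smult c P) = c * eval_var x P"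
  by (simp add: eval_var_def)

definition coeffs_in :: "'v set \<Rightarrow> ('v, 'k::comm_ring_1) mpoly poly \<Rightarrow> bool" where
  "coeffs_in V Q \<longleftrightarrow> (\<forall>i. vars_in V (coeff Q i))"

lemma coeffs_in_0 [simp]: "coeffs_in V 0"
  by (simp add: coeffs_in_def)
lemma coeffs_in_add: "coeffs_in V P \<Longrightarrow> coeffs_in V Q \<Longrightarrow> coeffs_in V (P + Q)"
  by (simp add: coeffs_in_def vars_in_add)
lemma coeffs_in_diff: "coeffs_in V P \<Longrightarrow> coeffs_in V Q \<Longrightarrow> coeffs_in V (P - Q)"
  unfolding coeffs_in_def coeff_diff by (blast intro: vars_in_diff)
lemma coeffs_in_mult: "coeffs_in V P \<Longrightarrow> coeffs_in V Q \<Longrightarrow> coeffs_in V (P * Q)"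
  unfolding coeffs_in_def coeff_mult by (blast intro: vars_in_sum vars_in_mult)
lemma coeffs_in_const: "vars_in V c \<Longrightarrow> coeffs_in V [:c:]"
  by (simp add: coeffs_in_def coeff_pCons split: nat.split)
lemma coeffs_in_monom: "vars_in V c \<Longrightarrow> coeffs_in V (monom c n)"
  by (simp add: coeffs_in_def coeff_monom)
lemma coeffs_in_smult: "vars_in V c \<Longrightarrow> coeffs_in V P \<Longrightarrow> coeffs_in V (smult c P)"
  unfolding coeffs_in_def coeff_smult by (blast intro: vars_in_mult)
lemma coeffs_in_sum: "(\<And>i. i \<in> I \<Longrightarrow> coeffs_in V (f i)) \<Longrightarrow> coeffs_in V (sum f I)"
  by (induction I rule: infinite_finite_induct) (auto intro: coeffs_in_add)
lemma coeffs_in_pderiv: "coeffs_in V P \<Longrightarrow> coeffs_in V (pderiv P)"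
  unfolding coeffs_in_def coeff_pderiv by (metis vars_in_mult vars_in_of_nat)
lemma coeffs_in_mono: "coeffs_in V P \<Longrightarrow> V \<subseteq> W \<Longrightarrow> coeffs_in W P"
  unfolding coeffs_in_def using vars_in_mono by blast

lemma vars_in_eval_var:
  assumes "coeffs_in W Q" "W \<subseteq> V" "x \<in> V"
  shows "vars_in V (eval_var x Q)"
proof -
  have "eval_var x Q = (\<Sum>i\<le>degree Q. coeff Q i * Var x ^ i)"
    by (simp add: eval_var_def poly_altdef)
  moreover have "vars_in V (coeff Q i * Var x ^ i)" for i
    using assms vars_in_mono unfolding coeffs_in_def by (blast intro: vars_in_mult vars_in_power vars_in_Var)
  ultimately show ?thesis by (auto intro: vars_in_sum)
qed

lemma lookup_mult_Var_power:
  fixes c :: "('v, 'k::comm_ring_1) mpoly"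
  assumes "vars_in (- {x}) c"
  shows "lookup (c * single (single x i) 1) m
    = (if lookup m x = i then lookup c (Poly_Mapping.update x 0 m) else 0)"
proof -
  have c: "c * single (single x i) 1 = (\<Sum>n\<in>keys c. single (n + single x i) (lookup c n))"
    by (subst mpoly_sum_terms[of c]) (simp add: sum_distrib_right mult_single)
  have key: "n + single x i = m \<longleftrightarrow> lookup m x = i \<and> n = Poly_Mapping.update x 0 m"
    if "n \<in> keys c" for n
  proof
    have nx: "lookup n x = 0" using assms that unfolding vars_in_def by (auto simp: in_keys_iff)
    assume "n + single x i = m"
    then show "lookup m x = i \<and> n = Poly_Mapping.update x 0 m"
      using nx by (auto intro!: poly_mapping_eqI simp: lookup_add lookup_update lookup_single when_def)
  next
    assume "lookup m x = i \<and> n = Poly_Mapping.update x 0 m"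
    then show "n + single x i = m"
      by (auto intro!: poly_mapping_eqI simp: lookup_add lookup_update lookup_single when_def)
  qed
  have "lookup (c * single (single x i) 1) m
      = (\<Sum>n\<in>keys c. if lookup m x = i \<and> n = Poly_Mapping.update x 0 m then lookup c n else 0)"
    unfolding c lookup_sum by (intro sum.cong refl) (simp add: lookup_single when_def key)
  also have "\<dots> = (if lookup m x = i then lookup c (Poly_Mapping.update x 0 m) else 0)"
    by (cases "Poly_Mapping.update x 0 m \<in> keys c") (auto simp: sum.delta' in_keys_iff)
  finally show ?thesis .
qed

lemma lookup_eval_var:
  assumes "coeffs_in (- {x}) Q"
  shows "lookup (eval_var x Q) m = lookup (coeff Q (lookup m x)) (Poly_Mapping.update x 0 m)"
proof -
  have "eval_var x Q = (\<Sum>i\<le>degree Q. coeff Q i * single (single x i) 1)"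
    by (simp add: eval_var_def poly_altdef Var_power)
  then have "lookup (eval_var x Q) m = (\<Sum>i\<le>degree Q.
      if lookup m x = i then lookup (coeff Q i) (Poly_Mapping.update x 0 m) else 0)"
    using assms by (simp add: lookup_sum lookup_mult_Var_power coeffs_in_def)
  also have "\<dots> = lookup (coeff Q (lookup m x)) (Poly_Mapping.update x 0 m)"
    by (cases "lookup m x \<le> degree Q") (auto simp: sum.delta coeff_eq_0)
  finally show ?thesis .
qed

lemma eval_var_eq_0:
  assumes "coeffs_in (- {x}) Q" "eval_var x Q = 0"
  shows "Q = 0"
proof (rule poly_eqI, rule poly_mapping_eqI)
  fix i n
  show "lookup (coeff Q i) n = lookup (coeff 0 i) n"
  proof (cases "lookup n x = 0")
    case True
    define m where "m = n + single x i"
    have "lookup m x = i" using True by (simp add: m_def lookup_add)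
    moreover have "Poly_Mapping.update x 0 m = n"
      using True by (auto intro!: poly_mapping_eqI simp: m_def lookup_add lookup_update lookup_single when_def)
    ultimately show ?thesis using lookup_eval_var[OF assms(1), of m] assms(2) by simp
  next
    case False
    have "n \<notin> keys (coeff Q i)"
    proof
      assume "n \<in> keys (coeff Q i)"
      then have "keys n \<subseteq> - {x}" using assms(1) unfolding coeffs_in_def vars_in_def by blast
      then show False using False by (auto simp: in_keys_iff)
    qed
    then show ?thesis by (simp add: in_keys_iff)
  qed
qed

lemma eval_var_inj:
  assumes "coeffs_in (- {x}) P" "coeffs_in (- {x}) Q" "eval_var x P = eval_var x Q"
  shows "P = Q"
  using eval_var_eq_0[of x "P - Q"] assms coeffs_in_diff by force

text \<open>The polynomial p viewed as a polynomial in x over the remaining variables.\<close>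
definition upoly :: "'v \<Rightarrow> ('v, 'k::comm_ring_1) mpoly \<Rightarrow> ('v, 'k) mpoly poly" where
  "upoly x p = (\<Sum>m\<in>keys p. monom (single (Poly_Mapping.update x 0 m) (lookup p m)) (lookup m x))"

lemma eval_var_upoly [simp]: "eval_var x (upoly x p) = p"
proof -
  have "eval_var x (upoly x p)
      = (\<Sum>m\<in>keys p. single (Poly_Mapping.update x 0 m) (lookup p m) * single (single x (lookup m x)) 1)"
    by (simp add: upoly_def eval_var_def poly_sum poly_monom Var_power)
  also have "\<dots> = (\<Sum>m\<in>keys p. single m (lookup p m))"
  proof (intro sum.cong refl)
    fix m :: "'a \<Rightarrow>\<^sub>0 nat"
    have "Poly_Mapping.update x 0 m + single x (lookup m x) = m"
      by (rule poly_mapping_eqI) (simp add: lookup_add lookup_update lookup_single when_def)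
    then show "single (Poly_Mapping.update x 0 m) (lookup p m) * single (single x (lookup m x)) 1
        = single m (lookup p m)" by (simp add: mult_single)
  qed
  also have "\<dots> = p" by (rule mpoly_sum_terms[symmetric])
  finally show ?thesis .
qed

lemma keys_update_monomial: "keys (Poly_Mapping.update x 0 (m :: 'v \<Rightarrow>\<^sub>0 nat)) = keys m - {x}"
  by (auto simp: in_keys_iff lookup_update split: if_splits)

lemma coeffs_in_upoly: "vars_in V p \<Longrightarrow> coeffs_in (V - {x}) (upoly x p)"
  unfolding upoly_def
  by (intro coeffs_in_sum coeffs_in_monom vars_in_single) (auto simp: vars_in_def keys_update_monomial)

lemma coeffs_in_upoly_x_free: "coeffs_in (- {x}) (upoly x p)"
  using coeffs_in_upoly[of UNIV p x] by (simp add: Compl_eq_Diff_UNIV)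

lemma upoly_unique: "coeffs_in (- {x}) Q \<Longrightarrow> eval_var x Q = p \<Longrightarrow> upoly x p = Q"
  using eval_var_inj coeffs_in_upoly_x_free eval_var_upoly by metis

lemma upoly_add: "upoly x (p + q) = upoly x p + upoly x q"
  by (rule upoly_unique) (auto intro: coeffs_in_add coeffs_in_upoly_x_free)
lemma upoly_mult: "upoly x (p * q) = upoly x p * upoly x q"
  by (rule upoly_unique) (auto intro: coeffs_in_mult coeffs_in_upoly_x_free)
lemma upoly_const: "vars_in (- {x}) c \<Longrightarrow> upoly x c = [:c:]"
  by (rule upoly_unique) (auto intro: coeffs_in_const)
lemma upoly_eval_var: "coeffs_in (- {x}) Q \<Longrightarrow> upoly x (eval_var x Q) = Q"
  by (rule upoly_unique) auto
lemma upoly_eq_0_iff [simp]: "upoly x p = 0 \<longleftrightarrow> p = 0"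
  by (metis eval_var_upoly upoly_const vars_in_0 pCons_0_0)

lemma dvd_iff_dvd_coeffs:
  fixes c p :: "('v::linorder, 'k::field) mpoly"
  assumes "vars_in (- {x}) c"
  shows "c dvd p \<longleftrightarrow> (\<forall>i. c dvd coeff (upoly x p) i)"
proof
  assume "c dvd p"
  then obtain t where "p = c * t" by (auto elim: dvdE)
  then have "upoly x p = smult c (upoly x t)" by (simp add: upoly_mult upoly_const[OF assms])
  then show "\<forall>i. c dvd coeff (upoly x p) i" by simp
next
  assume "\<forall>i. c dvd coeff (upoly x p) i"
  then have "[:c:] dvd upoly x p" by (simp add: const_poly_dvd_iff)
  then obtain T where "upoly x p = [:c:] * T" by (auto elim: dvdE)
  then have "eval_var x (upoly x p) = c * eval_var x T" by simp
  then show "c dvd p" by simp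
qed


section \<open>Degree in a variable, units and irreducible factors\<close>

text \<open>From now on the variables are linearly ordered, so that S is an integral domain.\<close>

definition deg_var :: "'v \<Rightarrow> ('v::linorder, 'k::field) mpoly \<Rightarrow> nat" where
  "deg_var x p = degree (upoly x p)"

lemma deg_var_mult: "p \<noteq> 0 \<Longrightarrow> q \<noteq> 0 \<Longrightarrow> deg_var x (p * q) = deg_var x p + deg_var x q"
  unfolding deg_var_def upoly_mult by (rule degree_mult_eq) auto

lemma deg_var_eq_0_iff: "deg_var x p = 0 \<longleftrightarrow> vars_in (- {x}) p"
proof
  assume "deg_var x p = 0"
  then have "upoly x p = [:coeff (upoly x p) 0:]" unfolding deg_var_def by (rule degree_0_id[symmetric])
  then have "p = coeff (upoly x p) 0" using eval_var_upoly[of x p] by (metis eval_var_const)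
  then show "vars_in (- {x}) p" using coeffs_in_upoly_x_free[of x p] unfolding coeffs_in_def by metis
next
  assume "vars_in (- {x}) p"
  then show "deg_var x p = 0" unfolding deg_var_def by (simp add: upoly_const)
qed

lemma deg_var_0 [simp]: "deg_var x 0 = 0"
  by (simp add: deg_var_eq_0_iff)

lemma vars_in_iff_deg_var: "vars_in V p \<longleftrightarrow> (\<forall>x. x \<notin> V \<longrightarrow> deg_var x p = 0)"
  unfolding deg_var_eq_0_iff by (rule vars_in_iff)

lemma deg_var_eq_0: "vars_in W p \<Longrightarrow> x \<notin> W \<Longrightarrow> deg_var x p = 0"
  unfolding deg_var_eq_0_iff by (erule vars_in_mono) blast

lemma vars_in_remove_var:
  assumes "vars_in (insert x W) p" "deg_var x p = 0" "x \<notin> W"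
  shows "vars_in W p"
  using assms unfolding vars_in_iff_deg_var by (metis insert_iff)

lemma vars_in_factor:
  fixes a q b :: "('v::linorder, 'k::field) mpoly"
  assumes "b = a * q" "a \<noteq> 0" "vars_in V b"
  shows "vars_in V q"
proof (cases "q = 0")
  case False
  show ?thesis unfolding vars_in_iff_deg_var
  proof (intro allI impI)
    fix x assume "x \<notin> V"
    then have "deg_var x b = 0" using assms(3) vars_in_iff_deg_var by blast
    then show "deg_var x q = 0" using deg_var_mult[OF assms(2) False, of x] assms(1) by simp
  qed
qed simp

lemma unit_iff_const: "(p :: ('v::linorder, 'k::field) mpoly) dvd 1 \<longleftrightarrow> p \<noteq> 0 \<and> vars_in {} p"
proof
  assume u: "p dvd 1"
  then obtain q where q: "1 = p * q" by (auto elim: dvdE)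
  then have "p \<noteq> 0" "q \<noteq> 0" by auto
  with q show "p \<noteq> 0 \<and> vars_in {} p"
    using vars_in_factor[of 1 q p "{}"] by (simp add: mult.commute)
next
  assume p: "p \<noteq> 0 \<and> vars_in {} p"
  define c where "c = lookup p 0"
  have p_eq: "p = single 0 c" using p vars_in_empty_const c_def by blast
  have c: "c \<noteq> 0" using p p_eq by (metis single_zero)
  have "p * single 0 (inverse c) = single 0 (c * inverse c)"
    unfolding p_eq mult_single by simp
  also have "\<dots> = 1" by (simp add: c single_one)
  finally show "p dvd 1" by (rule dvdI[OF sym])
qed

lemma deg_var_unit: "p dvd 1 \<Longrightarrow> deg_var x p = 0"
  unfolding unit_iff_const deg_var_eq_0_iff using vars_in_mono[of "{}" p "- {x}"] by blast

lemma nonunit_has_var: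
  assumes "vars_in V p" "p \<noteq> 0" "\<not> p dvd 1"
  shows "\<exists>x\<in>V. deg_var x p > 0"
proof (rule ccontr)
  assume "\<not> ?thesis"
  then have "vars_in {} p" using assms(1) unfolding vars_in_iff_deg_var by auto
  then show False using assms unit_iff_const by blast
qed

text \<open>The sum of the degrees in the variables of V: a measure that strictly decreases
  when a non-unit factor is split off.\<close>
definition deg_sum :: "'v set \<Rightarrow> ('v::linorder, 'k::field) mpoly \<Rightarrow> nat" where
  "deg_sum V p = (\<Sum>x\<in>V. deg_var x p)"

lemma deg_sum_less:
  assumes "finite V" "vars_in V c" "c = a * b" "c \<noteq> 0" "\<not> b dvd 1"
  shows "deg_sum V a < deg_sum V c"
proof -
  have a0: "a \<noteq> 0" and b0: "b \<noteq> 0" using assms by auto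
  have "vars_in V b" using vars_in_factor[OF assms(3) a0 assms(2)] .
  then obtain y where y: "y \<in> V" "deg_var y b > 0" using nonunit_has_var b0 assms(5) by blast
  have d: "deg_var x c = deg_var x a + deg_var x b" for x using deg_var_mult[OF a0 b0] assms(3) by simp
  show ?thesis unfolding deg_sum_def
  proof (rule sum_strict_mono_ex1[OF assms(1)])
    show "\<forall>x\<in>V. deg_var x a \<le> deg_var x c" using d by simp
    show "\<exists>x\<in>V. deg_var x a < deg_var x c" using d y by (intro bexI[of _ y]) auto
  qed
qed

lemma irreducible_factor_exists:
  fixes c :: "('v::linorder, 'k::field) mpoly"
  assumes "finite V" "vars_in V c" "c \<noteq> 0" "\<not> c dvd 1"
  shows "\<exists>\<pi>. irreducible \<pi> \<and> \<pi> dvd c \<and> vars_in V \<pi>"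
  using assms(2-4)
proof (induction "deg_sum V c" arbitrary: c rule: less_induct)
  case less
  show ?case
  proof (cases "irreducible c")
    case True
    then show ?thesis using less.prems by (intro exI[of _ c]) simp
  next
    case False
    then obtain a b where ab: "c = a * b" "\<not> a dvd 1" "\<not> b dvd 1"
      using less.prems unfolding irreducible_def by blast
    have a0: "a \<noteq> 0" using ab less.prems by auto
    have aV: "vars_in V a" using vars_in_factor[of c b a V] ab less.prems by (auto simp: mult.commute)
    have "deg_sum V a < deg_sum V c" using deg_sum_less[OF assms(1) less.prems(1) ab(1) less.prems(2) ab(3)] .
    then obtain \<pi> where "irreducible \<pi>" "\<pi> dvd a" "vars_in V \<pi>" using less.hyps aV a0 ab(2) by blast
    then show ?thesis using ab(1) by (meson dvd_mult2)
  qed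
qed

lemma vars_in_nonzero_induct [consumes 3, case_names unit irreducible_factor]:
  fixes c :: "('v::linorder, 'k::field) mpoly"
  assumes "finite V" "vars_in V c" "c \<noteq> 0"
    and unit: "\<And>u. u dvd 1 \<Longrightarrow> P u"
    and irreducible_factor: "\<And>c \<pi>. vars_in V c \<Longrightarrow> c \<noteq> 0 \<Longrightarrow> vars_in V \<pi> \<Longrightarrow> irreducible \<pi>
      \<Longrightarrow> P c \<Longrightarrow> P (c * \<pi>)"
  shows "P c"
  using assms(2,3)
proof (induction "deg_sum V c" arbitrary: c rule: less_induct)
  case less
  show ?case
  proof (cases "c dvd 1")
    case True
    then show ?thesis by (rule unit)
  next
    case False
    obtain \<pi> where \<pi>: "irreducible \<pi>" "\<pi> dvd c" "vars_in V \<pi>"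
      using irreducible_factor_exists[OF assms(1) less.prems False] by blast
    obtain c' where c': "c = c' * \<pi>" using \<pi>(2) by (metis dvd_def mult.commute)
    have "\<pi> \<noteq> 0" using \<pi>(1) by auto
    then have c'V: "vars_in V c'" using vars_in_factor[of c \<pi> c' V] c' less.prems(1) by (simp add: mult.commute)
    have c'0: "c' \<noteq> 0" using c' less.prems(2) by auto
    have "deg_sum V c' < deg_sum V c"
      using deg_sum_less[OF assms(1) less.prems(1) c' less.prems(2)] \<pi>(1) by (simp add: irreducible_def)
    then have "P c'" using less.hyps c'V c'0 by blast
    then show ?thesis unfolding c' using irreducible_factor c'V c'0 \<pi>(3,1) by blast
  qed
qed


section \<open>Pseudo-division in one variable\<close>

lemma pseudo_reduction_degree_less:
  fixes G H :: "'a::comm_ring_1 poly"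
  assumes "degree G \<le> degree H" "degree G \<ge> 1"
  shows "degree (smult (lead_coeff G) H - monom (lead_coeff H) (degree H - degree G) * G) < degree H"
    (is "degree ?H' < _")
proof -
  define d where "d = degree H - degree G"
  have dH: "degree H = d + degree G" using assms(1) d_def by simp
  have le: "degree ?H' \<le> degree H"
  proof -
    have "degree (monom (lead_coeff H) d * G) \<le> degree H"
      using degree_mult_le[of "monom (lead_coeff H) d" G] degree_monom_le[of "lead_coeff H" d] dH
      by linarith
    then show ?thesis unfolding d_def by (meson degree_diff_le degree_smult_le)
  qed
  have "coeff (monom (lead_coeff H) d * G) (d + degree G) = lead_coeff H * lead_coeff G"
    by (simp only: coeff_monom_mult) simp
  then have "coeff ?H' (degree H) = lead_coeff G * lead_coeff H - lead_coeff H * lead_coeff G"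
    unfolding coeff_diff coeff_smult d_def[symmetric] by (simp add: dH)
  then have top: "coeff ?H' (degree H) = 0" by (simp add: mult.commute)
  show ?thesis
  proof (cases "?H' = 0")
    case True
    then show ?thesis using dH assms(2) by simp
  next
    case False
    then have "coeff ?H' (degree ?H') \<noteq> 0" by (rule leading_coeff_neq_0)
    then show ?thesis using le top by (metis le_neq_implies_less)
  qed
qed

lemma pseudo_divmod_coeffs_in:
  fixes G H :: "('v::linorder, 'k::field) mpoly poly"
  assumes "coeffs_in W G" "coeffs_in W H" "degree G \<ge> 1"
  shows "\<exists>k Q R. coeffs_in W Q \<and> coeffs_in W R \<and> smult (lead_coeff G ^ k) H = Q * G + R
    \<and> degree R < degree G"
  using assms(2)
proof (induction "degree H" arbitrary: H rule: less_induct)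
  case less
  show ?case
  proof (cases "degree H < degree G")
    case True
    then show ?thesis using less.prems by (intro exI[of _ 0] exI[of _ 0] exI[of _ H]) auto
  next
    case False
    define a where "a = lead_coeff G"
    define b where "b = lead_coeff H"
    define d where "d = degree H - degree G"
    define H' where "H' = smult a H - monom b d * G"
    have lt: "degree H' < degree H"
      unfolding H'_def a_def b_def d_def using False assms(3) by (intro pseudo_reduction_degree_less) auto
    have lc: "vars_in W a" "vars_in W b"
      using assms(1) less.prems unfolding a_def b_def coeffs_in_def by blast+
    have "coeffs_in W H'" unfolding H'_def
      by (intro coeffs_in_diff coeffs_in_smult coeffs_in_mult coeffs_in_monom lc assms(1) less.prems)
    then obtain k Q R where QR: "coeffs_in W Q" "coeffs_in W R" "smult (a ^ k) H' = Q * G + R"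
        "degree R < degree G"
      using less.hyps[OF lt] unfolding a_def by blast
    define Q2 where "Q2 = Q + smult (a ^ k) (monom b d)"
    have "smult (a ^ Suc k) H = smult (a ^ k) (H' + monom b d * G)"
      unfolding H'_def by (simp add: smult_add_right mult.commute)
    also have "\<dots> = Q2 * G + R"
      unfolding Q2_def smult_add_right QR(3) by (simp add: algebra_simps)
    finally have "smult (a ^ Suc k) H = Q2 * G + R" .
    moreover have "coeffs_in W Q2" unfolding Q2_def
      by (intro coeffs_in_add coeffs_in_smult coeffs_in_monom vars_in_power lc QR(1))
    ultimately show ?thesis using QR unfolding a_def by blast
  qed
qed

definition lc_var :: "'v \<Rightarrow> ('v::linorder, 'k::field) mpoly \<Rightarrow> ('v, 'k) mpoly" where
  "lc_var x g = lead_coeff (upoly x g)"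

lemma vars_in_lc_var: "vars_in V g \<Longrightarrow> vars_in (V - {x}) (lc_var x g)"
  unfolding lc_var_def using coeffs_in_upoly[of V g x] unfolding coeffs_in_def by blast

lemma lc_var_nonzero: "g \<noteq> 0 \<Longrightarrow> lc_var x g \<noteq> 0"
  by (simp add: lc_var_def)

lemma pseudo_divmod_var:
  fixes g h :: "('v::linorder, 'k::field) mpoly"
  assumes "x \<notin> W" "vars_in (insert x W) g" "vars_in (insert x W) h" "deg_var x g \<ge> 1"
  shows "\<exists>k q r. vars_in (insert x W) q \<and> vars_in (insert x W) r
    \<and> lc_var x g ^ k * h = q * g + r \<and> deg_var x r < deg_var x g"
proof -
  have W: "insert x W - {x} = W" using assms(1) by auto
  have cgh: "coeffs_in W (upoly x g)" "coeffs_in W (upoly x h)"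
    using coeffs_in_upoly[OF assms(2), of x] coeffs_in_upoly[OF assms(3), of x] unfolding W by auto
  obtain k Q R where QR: "coeffs_in W Q" "coeffs_in W R"
      "smult (lead_coeff (upoly x g) ^ k) (upoly x h) = Q * upoly x g + R" "degree R < degree (upoly x g)"
    using pseudo_divmod_coeffs_in[OF cgh] assms(4) unfolding deg_var_def by blast
  have "W \<subseteq> - {x}" using assms(1) by blast
  then have R: "coeffs_in (- {x}) R" by (rule coeffs_in_mono[OF QR(2)])
  have "eval_var x (smult (lead_coeff (upoly x g) ^ k) (upoly x h)) = eval_var x (Q * upoly x g + R)"
    using QR(3) by simp
  then have "lc_var x g ^ k * h = eval_var x Q * g + eval_var x R" by (simp add: lc_var_def)
  moreover have "deg_var x (eval_var x R) < deg_var x g"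
    unfolding deg_var_def upoly_eval_var[OF R] using QR(4) by simp
  moreover have "vars_in (insert x W) (eval_var x Q)" "vars_in (insert x W) (eval_var x R)"
    using QR(1,2) by (auto intro: vars_in_eval_var[of W])
  ultimately show ?thesis by blast
qed


section \<open>Irreducible polynomials are prime\<close>

definition prime_in :: "'v set \<Rightarrow> ('v::linorder, 'k::field) mpoly \<Rightarrow> bool" where
  "prime_in V p \<longleftrightarrow> (\<forall>a b. vars_in V a \<longrightarrow> vars_in V b \<longrightarrow> p dvd a * b \<longrightarrow> p dvd a \<or> p dvd b)"

lemma unit_mult_dvd_cancel:
  fixes p u t :: "('v::linorder, 'k::field) mpoly"
  assumes "u dvd 1" "p dvd u * t"
  shows "p dvd t"
proof -
  obtain u' where "1 = u * u'" using assms(1) by (auto elim: dvdE)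
  then have "t = u' * (u * t)" by (metis mult.assoc mult.commute mult_1)
  then show ?thesis using assms(2) by (metis dvd_mult)
qed

lemma irreducible_not_dvd_by_var_free:
  fixes p \<pi> :: "('v::linorder, 'k::field) mpoly"
  assumes "irreducible p" "deg_var x p \<ge> 1" "vars_in (- {x}) \<pi>" "\<not> \<pi> dvd 1"
  shows "\<not> \<pi> dvd p"
proof
  assume "\<pi> dvd p"
  then obtain p' where p: "p = \<pi> * p'" by (auto elim: dvdE)
  then have "p' dvd 1" using assms(1,4) by (auto dest: irreducibleD)
  moreover have "\<pi> \<noteq> 0" "p' \<noteq> 0" using p assms(1) by auto
  ultimately have "deg_var x p = deg_var x \<pi>"
    using p deg_var_mult[of \<pi> p' x] deg_var_unit[of p' x] by simp
  moreover have "deg_var x \<pi> = 0" using assms(3) deg_var_eq_0_iff by blast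
  ultimately show False using assms(2) by simp
qed

text \<open>Let g = u a + v p have least x-degree among the nonzero combinations of a and p
  over K[W \<union> {x}], and positive x-degree. Then a power of the leading coefficient of g
  times any combination s a + t p is a multiple of g: pseudo-division leaves a remainder
  that is again a combination, of smaller degree, hence zero.\<close>
lemma min_combination_divides:
  fixes a p g u v s t :: "('v::linorder, 'k::field) mpoly" and x :: 'v and W :: "'v set"
  defines "V \<equiv> insert x W"
  assumes "x \<notin> W" "vars_in V a" "vars_in V p" "vars_in V u" "vars_in V v"
    and g: "g = u * a + v * p" "deg_var x g \<ge> 1"
    and minimal: "\<And>u' v'. vars_in V u' \<Longrightarrow> vars_in V v' \<Longrightarrow> u' * a + v' * p \<noteq> 0
      \<Longrightarrow> deg_var x g \<le> deg_var x (u' * a + v' * p)"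
    and "vars_in V s" "vars_in V t"
  shows "\<exists>k q. vars_in V q \<and> lc_var x g ^ k * (s * a + t * p) = q * g"
proof -
  have gV: "vars_in V g" unfolding g(1) using assms by (intro vars_in_add vars_in_mult)
  have hV: "vars_in V (s * a + t * p)" using assms by (intro vars_in_add vars_in_mult)
  obtain k q r where qr: "vars_in V q" "vars_in V r" "lc_var x g ^ k * (s * a + t * p) = q * g + r"
      "deg_var x r < deg_var x g"
    using pseudo_divmod_var[OF assms(2) gV[unfolded V_def] hV[unfolded V_def] g(2)] unfolding V_def by blast
  define l where "l = lc_var x g"
  have lV: "vars_in V l" using vars_in_lc_var[OF gV, of x] vars_in_mono unfolding l_def by blast
  have r: "r = (l ^ k * s - q * u) * a + (l ^ k * t - q * v) * p"
    using qr(3) unfolding g(1) l_def by (simp add: algebra_simps)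
  have "vars_in V (l ^ k * s - q * u)" "vars_in V (l ^ k * t - q * v)"
    using assms qr(1) lV by (auto intro: vars_in_diff vars_in_mult vars_in_power)
  then have "r = 0" using minimal[of "l ^ k * s - q * u" "l ^ k * t - q * v"] qr(4) r by fastforce
  then show ?thesis using qr(1,3) by auto
qed

text \<open>The inductive step: if irreducible elements of K[W] are prime in K[W], then
  irreducible elements of K[W \<union> {x}] are prime in K[W \<union> {x}].\<close>
context
  fixes x :: "'v::linorder" and W :: "'v set"
  assumes x_notin: "x \<notin> W" and finite_W: "finite W"
    and prime_W: "\<And>p :: ('v, 'k::field) mpoly. vars_in W p \<Longrightarrow> irreducible p \<Longrightarrow> prime_in W p"
begin

lemma gauss_lift:
  fixes \<pi> :: "('v, 'k) mpoly"
  assumes "vars_in W \<pi>" "irreducible \<pi>"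
  shows "prime_in (insert x W) \<pi>"
  unfolding prime_in_def
proof (intro allI impI)
  fix a b :: "('v, 'k) mpoly"
  assume a: "vars_in (insert x W) a" and b: "vars_in (insert x W) b" and dvd: "\<pi> dvd a * b"
  have "W \<subseteq> - {x}" using x_notin by blast
  then have \<pi>x: "vars_in (- {x}) \<pi>" using vars_in_mono[OF assms(1)] by blast
  have W: "insert x W - {x} = W" using x_notin by blast
  have coeffs: "vars_in W (coeff (upoly x a) i)" "vars_in W (coeff (upoly x b) i)" for i
    using coeffs_in_upoly[OF a, of x] coeffs_in_upoly[OF b, of x] unfolding W coeffs_in_def by blast+
  have "\<forall>n. \<pi> dvd coeff (upoly x a * upoly x b) n"
    using dvd_iff_dvd_coeffs[OF \<pi>x, of "a * b"] dvd unfolding upoly_mult by blast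
  then have "(\<forall>i. \<pi> dvd coeff (upoly x a) i) \<or> (\<forall>j. \<pi> dvd coeff (upoly x b) j)"
    using content_prime_lemma prime_W[OF assms] coeffs unfolding prime_in_def by blast
  then show "\<pi> dvd a \<or> \<pi> dvd b" using dvd_iff_dvd_coeffs[OF \<pi>x] by blast
qed

lemma irreducible_dvd_cancel:
  fixes p c t :: "('v, 'k) mpoly"
  assumes p: "vars_in (insert x W) p" "irreducible p" "deg_var x p \<ge> 1"
    and c: "vars_in W c" "c \<noteq> 0" and t: "vars_in (insert x W) t"
  shows "p dvd c * t \<Longrightarrow> p dvd t"
  using finite_W c
proof (induction c rule: vars_in_nonzero_induct)
  case (unit u)
  then show ?case using unit_mult_dvd_cancel by blast
next
  case (irreducible_factor c \<pi>)
  obtain h where h: "c * \<pi> * t = p * h" using irreducible_factor.prems by (auto elim: dvdE)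
  have "vars_in (insert x W) (c * \<pi> * t)"
    using irreducible_factor.hyps(1,3) t vars_in_mono by (intro vars_in_mult) blast+
  moreover have "p \<noteq> 0" using p(2) by auto
  ultimately have hV: "vars_in (insert x W) h" using vars_in_factor[OF h] by blast
  have "\<pi> dvd p * h" using h by (metis dvd_triv_left mult.assoc mult.commute)
  moreover have "\<not> \<pi> dvd p"
    using irreducible_not_dvd_by_var_free[OF p(2,3)] irreducible_factor.hyps(3,4) x_notin
    by (metis irreducible_not_unit vars_in_mono subset_Compl_singleton)
  ultimately have "\<pi> dvd h"
    using gauss_lift[OF irreducible_factor.hyps(3,4)] p(1) hV unfolding prime_in_def by blast
  then obtain h' where "h = \<pi> * h'" by (auto elim: dvdE)
  then have "\<pi> * (c * t) = \<pi> * (p * h')" using h by (simp add: ac_simps)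
  then have "p dvd c * t" using irreducible_factor.hyps(4) by auto
  then show ?case by (rule irreducible_factor.IH)
qed

lemma cofactor_free_of_var:
  fixes p c q g :: "('v, 'k) mpoly"
  assumes p: "irreducible p"
    and c: "vars_in W c" "c \<noteq> 0"
  shows "\<And>q g. vars_in (insert x W) q \<Longrightarrow> vars_in (insert x W) g \<Longrightarrow> deg_var x g \<ge> 1
    \<Longrightarrow> c * p = q * g \<Longrightarrow> deg_var x q = 0"
  using finite_W c
proof (induction c rule: vars_in_nonzero_induct)
  case (unit u q g)
  obtain u' where u': "1 = u * u'" using unit.hyps by (auto elim: dvdE)
  have "p = (u' * q) * g" using unit.prems(4) u' by (metis mult.assoc mult.commute mult_1)
  then have "u' * q dvd 1 \<or> g dvd 1" using p by (auto dest: irreducibleD)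
  moreover have "\<not> g dvd 1" using deg_var_unit unit.prems(3) by fastforce
  moreover have "u' \<noteq> 0" "q \<noteq> 0" using u' unit.prems(4) p by auto
  ultimately show ?case using deg_var_unit[of "u' * q" x] deg_var_mult[of u' q x] by simp
next
  case (irreducible_factor c \<pi> q g)
  have \<pi>0: "\<pi> \<noteq> 0" using irreducible_factor.hyps(4) by auto
  have deg\<pi>: "deg_var x \<pi> = 0" using deg_var_eq_0[OF irreducible_factor.hyps(3) x_notin] .
  have "\<pi> dvd q * g" using irreducible_factor.prems(4) by (metis dvd_triv_right mult.assoc mult.commute)
  then have "\<pi> dvd q \<or> \<pi> dvd g"
    using gauss_lift[OF irreducible_factor.hyps(3,4)] irreducible_factor.prems(1,2)
    unfolding prime_in_def by blast
  then show ?case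
  proof
    assume "\<pi> dvd q"
    then obtain q' where q: "q = \<pi> * q'" by (auto elim: dvdE)
    have "\<pi> * (c * p) = \<pi> * (q' * g)" using irreducible_factor.prems(4) q by (simp add: ac_simps)
    then have "c * p = q' * g" using \<pi>0 by simp
    moreover have "vars_in (insert x W) q'" using vars_in_factor[OF q \<pi>0 irreducible_factor.prems(1)] .
    ultimately have "deg_var x q' = 0" using irreducible_factor.IH irreducible_factor.prems(2,3) by blast
    moreover have "q' \<noteq> 0" using q irreducible_factor.prems(4) irreducible_factor.hyps(2) p \<pi>0 by auto
    ultimately show ?thesis using q deg_var_mult[OF \<pi>0, of q' x] deg\<pi> by simp
  next
    assume "\<pi> dvd g"
    then obtain g' where g: "g = \<pi> * g'" by (auto elim: dvdE)
    have "\<pi> * (c * p) = \<pi> * (q * g')" using irreducible_factor.prems(4) g by (simp add: ac_simps)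
    then have "c * p = q * g'" using \<pi>0 by simp
    moreover have "vars_in (insert x W) g'" using vars_in_factor[OF g \<pi>0 irreducible_factor.prems(2)] .
    moreover have "g' \<noteq> 0" using g irreducible_factor.prems(3) by auto
    then have "deg_var x g' \<ge> 1" using g deg_var_mult[OF \<pi>0, of g' x] deg\<pi> irreducible_factor.prems(3) by simp
    ultimately show ?thesis using irreducible_factor.IH irreducible_factor.prems(1) by blast
  qed
qed

lemma dvd_of_min_combination:
  fixes p a g u v :: "('v, 'k) mpoly"
  defines "V \<equiv> insert x W"
  assumes p: "vars_in V p" "irreducible p" "deg_var x p \<ge> 1"
    and a: "vars_in V a" and uv: "vars_in V u" "vars_in V v"
    and g: "g = u * a + v * p" "g \<noteq> 0" "deg_var x g \<ge> 1"
    and minimal: "\<And>u' v'. vars_in V u' \<Longrightarrow> vars_in V v' \<Longrightarrow> u' * a + v' * p \<noteq> 0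
      \<Longrightarrow> deg_var x g \<le> deg_var x (u' * a + v' * p)"
  shows "p dvd a"
proof -
  define l where "l = lc_var x g"
  have gV: "vars_in V g" unfolding g(1) using p a uv by (intro vars_in_add vars_in_mult)
  have lW: "vars_in W l" using vars_in_lc_var[OF gV, of x] x_notin unfolding l_def V_def
    by (metis Diff_insert_absorb)
  have l0: "l \<noteq> 0" using lc_var_nonzero[OF g(2)] unfolding l_def .
  note divides = min_combination_divides[OF x_notin a[unfolded V_def] p(1)[unfolded V_def]
      uv[unfolded V_def] g(1,3) minimal[unfolded V_def], folded V_def l_def]
  obtain k q where q: "vars_in V q" "l ^ k * (0 * a + 1 * p) = q * g"
    using divides[of 0 1] by auto
  obtain m q' where q': "l ^ m * (1 * a + 0 * p) = q' * g"
    using divides[of 1 0] by auto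
  have lk0: "l ^ k \<noteq> 0" and lm0: "l ^ m \<noteq> 0" using l0 by simp_all
  have qp: "l ^ k * p = q * g" using q(2) by simp
  have "deg_var x q = 0"
    by (rule cofactor_free_of_var[OF p(2) vars_in_power[OF lW] lk0 q(1)[unfolded V_def]
          gV[unfolded V_def] g(3) qp])
  then have qW: "vars_in W q" using vars_in_remove_var q(1) x_notin unfolding V_def by blast
  have "(q * l ^ m) * a = q' * (q * g)" using q' by (simp add: ac_simps)
  also have "\<dots> = (q' * l ^ k) * p" using qp by (simp add: ac_simps)
  finally have "p dvd (q * l ^ m) * a" by (metis dvd_triv_right)
  moreover have "vars_in W (q * l ^ m)" using qW lW by (intro vars_in_mult vars_in_power)
  moreover have "q * l ^ m \<noteq> 0" using qp lm0 lk0 p(2) by auto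
  ultimately show ?thesis using irreducible_dvd_cancel[OF p[unfolded V_def]] a[unfolded V_def] by blast
qed

text \<open>The step itself: if p does not involve x, use Gauss's lemma; otherwise, given
  p | a b with a \<noteq> 0, take a nonzero combination g of a and p of least x-degree.
  If g is free of x, then p | g b forces p | b; otherwise p | a.\<close>
lemma irreducible_prime_in_insert:
  fixes p :: "('v, 'k) mpoly"
  assumes p: "vars_in (insert x W) p" "irreducible p"
  shows "prime_in (insert x W) p"
proof (cases "deg_var x p = 0")
  case True
  then show ?thesis using gauss_lift vars_in_remove_var[OF p(1) True x_notin] p(2) by blast
next
  case False
  then have dp: "deg_var x p \<ge> 1" by simp
  show ?thesis unfolding prime_in_def
  proof (intro allI impI)
    fix a b assume a: "vars_in (insert x W) a" and b: "vars_in (insert x W) b" and dvd: "p dvd a * b"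
    show "p dvd a \<or> p dvd b"
    proof (cases "a = 0")
      case False
      define S where "S = {u * a + v * p | u v. vars_in (insert x W) u \<and> vars_in (insert x W) v \<and> u * a + v * p \<noteq> 0}"
      have "a \<in> S" unfolding S_def using False by (intro CollectI exI[of _ 1] exI[of _ 0]) simp
      then obtain g where "g \<in> S" and least: "\<And>g'. g' \<in> S \<Longrightarrow> deg_var x g \<le> deg_var x g'"
        using ex_has_least_nat[of "\<lambda>g. g \<in> S" a "deg_var x"] by blast
      then obtain u v where uv: "vars_in (insert x W) u" "vars_in (insert x W) v" "g = u * a + v * p" "g \<noteq> 0"
        unfolding S_def by blast
      have minimal: "\<And>u' v'. vars_in (insert x W) u' \<Longrightarrow> vars_in (insert x W) v' \<Longrightarrow> u' * a + v' * p \<noteq> 0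
          \<Longrightarrow> deg_var x g \<le> deg_var x (u' * a + v' * p)"
        using least unfolding S_def by blast
      show ?thesis
      proof (cases "deg_var x g = 0")
        case True
        have "vars_in (insert x W) g" unfolding uv(3) using uv p a by (intro vars_in_add vars_in_mult)
        then have gW: "vars_in W g" using vars_in_remove_var True x_notin by blast
        have "g * b = u * (a * b) + (v * b) * p" unfolding uv(3) by (simp add: algebra_simps)
        then have "p dvd g * b" using dvd by simp
        then show ?thesis using irreducible_dvd_cancel[OF p dp gW uv(4) b] by blast
      next
        case False
        then show ?thesis
          using dvd_of_min_combination[OF p(1,2) dp a uv(1,2,3,4) _ minimal] by simp
      qed
    qed simp
  qed
qed

end

lemma irreducible_imp_prime_in:
  fixes p :: "('v::linorder, 'k::field) mpoly"
  assumes "finite V" "vars_in V p" "irreducible p"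
  shows "prime_in V p"
  using assms
proof (induction V arbitrary: p rule: finite_induct)
  case empty
  then show ?case using unit_iff_const[of p] by (auto simp: irreducible_def)
next
  case (insert x W)
  show ?case by (rule irreducible_prime_in_insert[OF insert.hyps(2,1) insert.IH insert.prems(1,2)])
qed

corollary irreducible_imp_prime_elem:
  fixes p :: "('v::{linorder, finite}, 'k::field) mpoly"
  assumes "irreducible p"
  shows "prime_elem p"
proof (rule prime_elemI)
  show "p \<noteq> 0" "\<not> p dvd 1" using assms by (auto simp: irreducible_def)
  show "p dvd a * b \<Longrightarrow> p dvd a \<or> p dvd b" for a b
    using irreducible_imp_prime_in[of UNIV p] assms unfolding prime_in_def by simp
qed


section \<open>Partial derivatives\<close>

definition pdiff :: "'v \<Rightarrow> ('v::linorder, 'k::field_char_0) mpoly \<Rightarrow> ('v, 'k) mpoly" where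
  "pdiff x p = eval_var x (pderiv (upoly x p))"

lemma upoly_pdiff: "upoly x (pdiff x p) = pderiv (upoly x p)"
  unfolding pdiff_def by (rule upoly_eval_var) (intro coeffs_in_pderiv coeffs_in_upoly_x_free)

lemma pdiff_add: "pdiff x (p + q) = pdiff x p + pdiff x q"
  unfolding pdiff_def upoly_add pderiv_add by simp

lemma pdiff_mult: "pdiff x (p * q) = p * pdiff x q + q * pdiff x p"
  unfolding pdiff_def upoly_mult pderiv_mult by simp

lemma pdiff_const: "pdiff x (single 0 c) = 0"
  unfolding pdiff_def by (simp add: upoly_const)

lemma not_dvd_pdiff:
  assumes "deg_var x p \<ge> 1"
  shows "\<not> p dvd pdiff x p"
proof
  assume "p dvd pdiff x p"
  then obtain t where "pdiff x p = p * t" by (auto elim: dvdE)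
  then have "pderiv (upoly x p) = upoly x p * upoly x t" using upoly_pdiff[of x p] by (simp add: upoly_mult)
  then have "upoly x p dvd pderiv (upoly x p)" by simp
  moreover have "degree (upoly x p) \<noteq> 0" using assms unfolding deg_var_def by simp
  ultimately show False using not_dvd_pderiv by blast
qed

lemma irreducible_has_var:
  fixes p :: "('v::linorder, 'k::field) mpoly"
  assumes "irreducible p"
  obtains x where "deg_var x p \<ge> 1"
proof -
  have "p \<noteq> 0" "\<not> p dvd 1" using assms by (auto simp: irreducible_def)
  then obtain x where "0 < deg_var x p" using nonunit_has_var[of UNIV p] by auto
  then show thesis using that[of x] by simp
qed


section \<open>Transfer to a linearly ordered copy of the variables\<close>

text \<open>The library provides the integral-domain structure of S only for linearly
  ordered variables. A finite variable type is transferred to a copy carrying a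
  linear order induced by an injection into the naturals.\<close>

typedef 'n ovar = "UNIV :: 'n set"
  morphisms from_ovar to_ovar by simp

lemma inj_from_ovar: "inj from_ovar"
  by (meson injI from_ovar_inject)

lemma inj_to_ovar: "inj to_ovar"
  by (meson injI to_ovar_inject UNIV_I)

instance ovar :: (finite) finite
proof
  have "UNIV = to_ovar ` (UNIV :: 'a set)" by (metis to_ovar_cases surj_def)
  then show "finite (UNIV :: 'a ovar set)" by (metis finite finite_imageI)
qed

definition var_index :: "'n::finite \<Rightarrow> nat" where
  "var_index = (SOME f. inj f)"

lemma inj_var_index: "inj (var_index :: 'n::finite \<Rightarrow> nat)"
proof -
  obtain f :: "'n \<Rightarrow> nat" where "inj f"
    using finite_imp_inj_to_nat_seg[OF finite_UNIV] by blast
  then show ?thesis unfolding var_index_def by (rule someI[where P = inj])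
qed

instantiation ovar :: (finite) linorder
begin

definition less_eq_ovar :: "'a ovar \<Rightarrow> 'a ovar \<Rightarrow> bool" where
  "less_eq_ovar a b \<longleftrightarrow> var_index (from_ovar a) \<le> var_index (from_ovar b)"

definition less_ovar :: "'a ovar \<Rightarrow> 'a ovar \<Rightarrow> bool" where
  "less_ovar a b \<longleftrightarrow> var_index (from_ovar a) < var_index (from_ovar b)"

instance
proof
  have inj: "var_index (from_ovar a) = var_index (from_ovar b) \<Longrightarrow> a = b" for a b :: "'a ovar"
    using inj_var_index inj_from_ovar by (metis injD)
  fix x y z :: "'a ovar"
  show "(x < y) = (x \<le> y \<and> \<not> y \<le> x)" by (auto simp: less_eq_ovar_def less_ovar_def)
  show "x \<le> x" by (simp add: less_eq_ovar_def)
  show "x \<le> y \<Longrightarrow> y \<le> z \<Longrightarrow> x \<le> z" by (simp add: less_eq_ovar_def)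
  show "x \<le> y \<Longrightarrow> y \<le> x \<Longrightarrow> x = y" using inj by (simp add: less_eq_ovar_def)
  show "x \<le> y \<or> y \<le> x" by (auto simp: less_eq_ovar_def)
qed

end

lemma lookup_map_key: "inj f \<Longrightarrow> lookup (Poly_Mapping.map_key f p) k = lookup p (f k)"
  by (simp add: map_key.rep_eq)

definition mon_from_ovar :: "('n ovar \<Rightarrow>\<^sub>0 nat) \<Rightarrow> ('n \<Rightarrow>\<^sub>0 nat)" where
  "mon_from_ovar M = Poly_Mapping.map_key to_ovar M"

definition mon_to_ovar :: "('n \<Rightarrow>\<^sub>0 nat) \<Rightarrow> ('n ovar \<Rightarrow>\<^sub>0 nat)" where
  "mon_to_ovar m = Poly_Mapping.map_key from_ovar m"

lemma lookup_mon_from_ovar: "lookup (mon_from_ovar M) n = lookup M (to_ovar n)"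
  by (simp add: mon_from_ovar_def lookup_map_key inj_to_ovar)

lemma lookup_mon_to_ovar: "lookup (mon_to_ovar m) v = lookup m (from_ovar v)"
  by (simp add: mon_to_ovar_def lookup_map_key inj_from_ovar)

lemma mon_from_to_ovar [simp]: "mon_from_ovar (mon_to_ovar m) = m"
  by (rule poly_mapping_eqI) (simp add: lookup_mon_from_ovar lookup_mon_to_ovar to_ovar_inverse)

lemma mon_to_from_ovar [simp]: "mon_to_ovar (mon_from_ovar M) = M"
  by (rule poly_mapping_eqI) (simp add: lookup_mon_from_ovar lookup_mon_to_ovar from_ovar_inverse)

lemma inj_mon_from_ovar: "inj mon_from_ovar"
  by (metis injI mon_to_from_ovar)

lemma inj_mon_to_ovar: "inj mon_to_ovar"
  by (metis injI mon_from_to_ovar)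

lemma bij_mon_from_ovar: "bij mon_from_ovar"
  by (metis bijI' mon_to_from_ovar mon_from_to_ovar)

lemma mon_from_ovar_add: "mon_from_ovar (a + b) = mon_from_ovar a + mon_from_ovar b"
  by (rule poly_mapping_eqI) (simp add: lookup_mon_from_ovar lookup_add)

lemma mon_from_ovar_eq_0: "mon_from_ovar M = 0 \<longleftrightarrow> M = 0"
proof -
  have "mon_from_ovar 0 = 0" by (rule poly_mapping_eqI) (simp add: lookup_mon_from_ovar)
  then show ?thesis by (metis mon_to_from_ovar)
qed

definition to_ovar_poly :: "('n, 'k::comm_ring_1) mpoly \<Rightarrow> ('n ovar, 'k) mpoly" where
  "to_ovar_poly p = Poly_Mapping.map_key mon_from_ovar p"

definition from_ovar_poly :: "('n ovar, 'k::comm_ring_1) mpoly \<Rightarrow> ('n, 'k) mpoly" where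
  "from_ovar_poly P = Poly_Mapping.map_key mon_to_ovar P"

lemma lookup_to_ovar_poly: "lookup (to_ovar_poly p) M = lookup p (mon_from_ovar M)"
  by (simp add: to_ovar_poly_def lookup_map_key inj_mon_from_ovar)

lemma lookup_from_ovar_poly: "lookup (from_ovar_poly P) m = lookup P (mon_to_ovar m)"
  by (simp add: from_ovar_poly_def lookup_map_key inj_mon_to_ovar)

lemma from_to_ovar_poly [simp]: "from_ovar_poly (to_ovar_poly p) = p"
  by (rule poly_mapping_eqI) (simp add: lookup_to_ovar_poly lookup_from_ovar_poly)

lemma to_from_ovar_poly [simp]: "to_ovar_poly (from_ovar_poly P) = P"
  by (rule poly_mapping_eqI) (simp add: lookup_to_ovar_poly lookup_from_ovar_poly)

lemma to_ovar_poly_inj: "to_ovar_poly a = to_ovar_poly b \<Longrightarrow> a = b"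
  by (metis from_to_ovar_poly)

lemma to_ovar_poly_add: "to_ovar_poly (p + q) = to_ovar_poly p + to_ovar_poly q"
  by (rule poly_mapping_eqI) (simp add: lookup_to_ovar_poly lookup_add)

lemma to_ovar_poly_const: "to_ovar_poly (single 0 c) = single 0 c"
  by (rule poly_mapping_eqI)
    (simp add: lookup_to_ovar_poly lookup_single when_def mon_from_ovar_eq_0 eq_commute[of 0])

lemma to_ovar_poly_1 [simp]: "to_ovar_poly 1 = 1"
  using to_ovar_poly_const[of 1] by (simp only: single_one)

lemma to_ovar_poly_mult: "to_ovar_poly (p * q) = to_ovar_poly p * to_ovar_poly q"
proof (rule poly_mapping_eqI)
  fix M
  have inner: "(\<Sum>R. lookup (to_ovar_poly q) R when M = L + R)
      = (\<Sum>r. lookup q r when mon_from_ovar M = mon_from_ovar L + r)" for L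
  proof (rule sym, rule Sum_any.reindex_cong[OF bij_mon_from_ovar])
    show "(\<lambda>r. lookup q r when mon_from_ovar M = mon_from_ovar L + r) \<circ> mon_from_ovar
        = (\<lambda>R. lookup (to_ovar_poly q) R when M = L + R)"
      by (rule ext) (simp add: lookup_to_ovar_poly mon_from_ovar_add[symmetric] inj_eq[OF inj_mon_from_ovar])
  qed
  have "lookup (to_ovar_poly p * to_ovar_poly q) M
      = (\<Sum>L. lookup (to_ovar_poly p) L * (\<Sum>R. lookup (to_ovar_poly q) R when M = L + R))"
    by (rule lookup_mult)
  also have "\<dots> = (\<Sum>L. lookup p (mon_from_ovar L)
      * (\<Sum>r. lookup q r when mon_from_ovar M = mon_from_ovar L + r))"
    by (simp only: inner) (simp add: lookup_to_ovar_poly)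
  also have "\<dots> = (\<Sum>l. lookup p l * (\<Sum>r. lookup q r when mon_from_ovar M = l + r))"
    by (rule sym, rule Sum_any.reindex_cong[OF bij_mon_from_ovar]) (simp add: o_def)
  also have "\<dots> = lookup (p * q) (mon_from_ovar M)" by (rule lookup_mult[symmetric])
  finally show "lookup (to_ovar_poly (p * q)) M = lookup (to_ovar_poly p * to_ovar_poly q) M"
    by (simp add: lookup_to_ovar_poly)
qed

lemma from_ovar_poly_mult: "from_ovar_poly (P * Q) = from_ovar_poly P * from_ovar_poly Q"
  by (metis to_ovar_poly_mult to_from_ovar_poly from_to_ovar_poly)

lemma to_ovar_poly_power: "to_ovar_poly (p ^ n) = to_ovar_poly p ^ n"
  by (induction n) (simp_all add: to_ovar_poly_mult)

lemma to_ovar_poly_prod: "to_ovar_poly (\<Prod>i<(r::nat). f i) = (\<Prod>i<r. to_ovar_poly (f i))"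
  by (induction r) (simp_all add: to_ovar_poly_mult)

lemma to_ovar_poly_eq_0_iff [simp]: "to_ovar_poly p = 0 \<longleftrightarrow> p = 0"
proof -
  have "to_ovar_poly 0 = (0 :: ('a ovar, 'b::comm_ring_1) mpoly)"
    by (rule poly_mapping_eqI) (simp add: lookup_to_ovar_poly)
  then show ?thesis by (metis to_ovar_poly_inj)
qed

lemma to_ovar_poly_dvd_iff: "to_ovar_poly a dvd to_ovar_poly b \<longleftrightarrow> a dvd b"
proof
  assume "to_ovar_poly a dvd to_ovar_poly b"
  then obtain T where "to_ovar_poly b = to_ovar_poly a * T" by (auto elim: dvdE)
  then have "from_ovar_poly (to_ovar_poly b) = from_ovar_poly (to_ovar_poly a * T)" by simp
  then have "b = a * from_ovar_poly T" by (simp add: from_ovar_poly_mult)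
  then show "a dvd b" by simp
next
  assume "a dvd b"
  then obtain t where "b = a * t" by (auto elim: dvdE)
  then show "to_ovar_poly a dvd to_ovar_poly b" by (simp add: to_ovar_poly_mult)
qed

lemma to_ovar_poly_irreducible:
  assumes "irreducible p"
  shows "irreducible (to_ovar_poly p)"
  unfolding irreducible_def
proof (intro conjI allI impI)
  show "to_ovar_poly p \<noteq> 0" using assms by auto
  show "\<not> to_ovar_poly p dvd 1" using assms to_ovar_poly_dvd_iff[of p 1] by (auto simp: irreducible_def)
  fix A B assume "to_ovar_poly p = A * B"
  then have "from_ovar_poly (to_ovar_poly p) = from_ovar_poly (A * B)" by simp
  then have "p = from_ovar_poly A * from_ovar_poly B" by (simp add: from_ovar_poly_mult)
  then have "from_ovar_poly A dvd 1 \<or> from_ovar_poly B dvd 1" using assms by (auto simp: irreducible_def)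
  then show "A dvd 1 \<or> B dvd 1"
    using to_ovar_poly_dvd_iff[of "from_ovar_poly A" 1] to_ovar_poly_dvd_iff[of "from_ovar_poly B" 1] by simp
qed

definition partial :: "'n \<Rightarrow> ('n::finite, 'k::field_char_0) mpoly \<Rightarrow> ('n, 'k) mpoly" where
  "partial j p = from_ovar_poly (pdiff (to_ovar j) (to_ovar_poly p))"

lemma to_ovar_poly_partial: "to_ovar_poly (partial j p) = pdiff (to_ovar j) (to_ovar_poly p)"
  by (simp add: partial_def)

lemma partial_Der: "partial j \<in> Der"
  unfolding Der_def
proof (intro CollectI conjI allI)
  fix p q :: "('a, 'b) mpoly"
  show "partial j (p + q) = partial j p + partial j q"
    by (rule to_ovar_poly_inj) (simp add: to_ovar_poly_partial to_ovar_poly_add pdiff_add)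
  show "partial j (p * q) = p * partial j q + q * partial j p"
    by (rule to_ovar_poly_inj)
      (simp add: to_ovar_poly_partial to_ovar_poly_add to_ovar_poly_mult pdiff_mult)
next
  fix c :: 'b and p :: "('a, 'b) mpoly"
  show "partial j (const_mp c * p) = const_mp c * partial j p"
    by (rule to_ovar_poly_inj)
      (simp add: to_ovar_poly_partial to_ovar_poly_mult const_mp_def to_ovar_poly_const pdiff_mult pdiff_const)
qed


section \<open>The annihilator of D/D(f)\<close>

lemma smult_der_Der: "\<delta> \<in> Der \<Longrightarrow> smult_der s \<delta> \<in> Der"
  unfolding Der_def smult_der_def by (auto simp: algebra_simps)

lemma const_mp_inverse_mult: "c \<noteq> 0 \<Longrightarrow> const_mp (inverse c) * const_mp c = (1 :: ('n, 'k::field) mpoly)"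
  unfolding const_mp_def mult_single by (simp add: single_one)

lemma multiples_in_ann_quot:
  fixes f :: "('n, 'k::field) mpoly"
  assumes "\<forall>i<r. fs i ^ es i dvd f"
  shows "{s * f | s. True} \<subseteq> ann_quot (Der \<inter> (\<Inter>i<r. Der_log (fs i) (es i)))"
proof
  fix s assume "s \<in> {s * f | s. True}"
  then obtain s' where s: "s = s' * f" by blast
  have "smult_der s \<delta> \<in> Der \<inter> (\<Inter>i<r. Der_log (fs i) (es i))" if \<delta>: "\<delta> \<in> Der" for \<delta>
  proof -
    have "fs i ^ es i dvd smult_der s \<delta> (fs i)" if "i < r" for i
      using assms that unfolding smult_der_def s by (simp add: mult.assoc)
    then show ?thesis using smult_der_Der[OF \<delta>] unfolding Der_log_def by blast
  qed
  then show "s \<in> ann_quot (Der \<inter> (\<Inter>i<r. Der_log (fs i) (es i)))" unfolding ann_quot_def by blast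
qed

text \<open>If s annihilates D/M and M \<subseteq> D(g; e) for an irreducible g, then g^e divides s:
  test with the partial derivative in a variable occurring in g.\<close>
lemma ann_quot_irreducible_power_dvd:
  fixes g s :: "('n::finite, 'k::field_char_0) mpoly"
  assumes s: "s \<in> ann_quot M" and M: "M \<subseteq> Der_log g e" and g: "irreducible g"
  shows "g ^ e dvd s"
proof -
  have irr: "irreducible (to_ovar_poly g)" using to_ovar_poly_irreducible[OF g] .
  obtain x where x: "deg_var x (to_ovar_poly g) \<ge> 1" using irreducible_has_var[OF irr] by blast
  have "smult_der s (partial (from_ovar x)) \<in> Der_log g e"
    using s M partial_Der unfolding ann_quot_def by blast
  then have "g ^ e dvd s * partial (from_ovar x) g" unfolding Der_log_def smult_der_def by blast
  then have "to_ovar_poly g ^ e dvd to_ovar_poly s * pdiff x (to_ovar_poly g)"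
    using to_ovar_poly_dvd_iff[of "g ^ e" "s * partial (from_ovar x) g"]
    by (simp add: to_ovar_poly_power to_ovar_poly_mult to_ovar_poly_partial from_ovar_inverse)
  then have "to_ovar_poly g ^ e dvd to_ovar_poly s"
    using prime_power_dvd_cancel[OF irreducible_imp_prime_elem[OF irr] not_dvd_pdiff[OF x]] by blast
  then show ?thesis using to_ovar_poly_dvd_iff[of "g ^ e" s] by (simp add: to_ovar_poly_power)
qed

lemma irreducible_powers_prod_dvd:
  fixes fs :: "nat \<Rightarrow> ('n::finite, 'k::field) mpoly"
  assumes irr: "\<forall>i<r. irreducible (fs i)"
    and nonassoc: "\<forall>i<r. \<forall>j<r. i \<noteq> j \<longrightarrow> \<not> (fs i dvd fs j \<and> fs j dvd fs i)"
    and dvd: "\<forall>i<r. fs i ^ es i dvd s"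
  shows "(\<Prod>i<r. fs i ^ es i) dvd s"
proof -
  have "(\<Prod>i<r. to_ovar_poly (fs i) ^ es i) dvd to_ovar_poly s"
  proof (rule prod_prime_powers_dvd)
    show "\<forall>i<r. prime_elem (to_ovar_poly (fs i))"
      using irr by (simp add: irreducible_imp_prime_elem to_ovar_poly_irreducible)
    show "\<forall>i<r. \<forall>j<r. i \<noteq> j \<longrightarrow> \<not> (to_ovar_poly (fs i) dvd to_ovar_poly (fs j)
        \<and> to_ovar_poly (fs j) dvd to_ovar_poly (fs i))"
      using nonassoc by (simp add: to_ovar_poly_dvd_iff)
    show "\<forall>i<r. to_ovar_poly (fs i) ^ es i dvd to_ovar_poly s"
      using dvd by (simp add: to_ovar_poly_power[symmetric] to_ovar_poly_dvd_iff)
  qed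
  then show ?thesis
    using to_ovar_poly_dvd_iff[of "\<Prod>i<r. fs i ^ es i" s] by (simp add: to_ovar_poly_prod to_ovar_poly_power)
qed

theorem mainTheorem3:
  fixes f :: "('n::finite, 'k::field_char_0) mpoly"
    and c :: 'k and r :: nat
    and fs :: "nat \<Rightarrow> ('n, 'k) mpoly" and es :: "nat \<Rightarrow> nat"
  assumes "f \<noteq> 0"
    and "c \<noteq> 0"
    and "\<forall>i<r. irreducible (fs i)"
    and "\<forall>i<r. es i \<ge> 1"
    and "\<forall>i<r. \<forall>j<r. i \<noteq> j \<longrightarrow> \<not> (fs i dvd fs j \<and> fs j dvd fs i)"
    and "f = const_mp c * (\<Prod>i<r. fs i ^ es i)"
  shows "ann_quot (Der \<inter> (\<Inter>i<r. Der_log (fs i) (es i))) = {s * f | s. True}"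
proof
  have "fs i ^ es i dvd f" if "i < r" for i
    unfolding assms(6) using that by (intro dvd_mult dvd_prodI) auto
  then show "{s * f | s. True} \<subseteq> ann_quot (Der \<inter> (\<Inter>i<r. Der_log (fs i) (es i)))"
    by (intro multiples_in_ann_quot) blast
next
  show "ann_quot (Der \<inter> (\<Inter>i<r. Der_log (fs i) (es i))) \<subseteq> {s * f | s. True}"
  proof
    fix s assume s: "s \<in> ann_quot (Der \<inter> (\<Inter>i<r. Der_log (fs i) (es i)))"
    have "fs i ^ es i dvd s" if "i < r" for i
      using ann_quot_irreducible_power_dvd[OF s _ assms(3)[rule_format, OF that]] that by blast
    then have "(\<Prod>i<r. fs i ^ es i) dvd s"
      using irreducible_powers_prod_dvd assms(3,5) by blast
    then obtain t where t: "s = (\<Prod>i<r. fs i ^ es i) * t" by (auto elim: dvdE)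
    have "(const_mp (inverse c) * t) * f = (const_mp (inverse c) * const_mp c) * ((\<Prod>i<r. fs i ^ es i) * t)"
      unfolding assms(6) by (simp only: ac_simps)
    also have "\<dots> = s" unfolding const_mp_inverse_mult[OF assms(2)] t by simp
    finally show "s \<in> {s * f | s. True}" by blast
  qed
qed

end
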